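(* Let $G:[-1,1]\to\mathbb{R}$ be continuous and non-decreasing with $G(0)=0$, $\beta\in\mathbb{R}$, $Z$ a real random variable and $B$ an independent standard Brownian motion. For $\ell\in\mathbb M$ define $\Gamma[\ell]_t:=\mathbb{P}(\tau^\ell\le t)$, $t\ge0$, where $X^\ell_t:=Z+\beta t+B_t-G(\ell_t)$ and $\tau^\ell:=\inf\{t\ge0:X^\ell_t\le0\}$. Then for any $(\ell^n)_{n\ge1}\subset\mathbb M$ and $\ell\in\mathbb M$ with $\lim_{n\to\infty}\hat d(\ell^n,\ell)=0$, $$\limsup_{n\to\infty}\Gamma[\ell^n]_t\le\Gamma[\ell]_t\quad\text{for all }t\ge0.$$
   Context: $\mathbb M$ is the set of non-decreasing càdlàg functions $\ell$ on $[-1,\infty)$ with $\ell_t=0$ for $t\in[-1,0)$ and $\ell_\infty:=\lim_{t\to\infty}\ell_t\le1$. The Lévy distance on $\mathbb M$ is $d(\ell,\ell'):=\inf\{\varepsilon>0:\ \ell_{t+\varepsilon}+\varepsilon\ge\ell'_t\ge\ell_{t-\varepsilon}-\varepsilon\ \forall t\ge0\}$. For $t\ge0$ let $\ell_{t\wedge}$ denote the function $s\mapsto\ell_{\min(t,s)}$, $d_t(\ell,\ell'):=d(\ell_{t\wedge},\ell'_{t\wedge})$, and $\hat d(\ell,\ell'):=\int_0^\infty e^{-t}(d_t(\ell,\ell')\wedge1)\,\mathrm dt$. *)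

theory Defs
  imports "HOL-Probability.Probability"
begin

text \<open>The class M of non-decreasing cadlag functions on [-1,infinity), vanishing on [-1,0),
  with limit at infinity at most 1.  Functions are represented on all of the reals, with the
  convention that they vanish on all negative reals (which agrees with the paper on [-1,0)).\<close>
definition Mset :: "(real \<Rightarrow> real) set" where
  "Mset = {l. (\<forall>s<0. l s = 0) \<and> mono l \<and> (\<forall>t. continuous (at_right t) l)
              \<and> (\<forall>t. l t \<le> 1)}"

definition levy_dist :: "(real \<Rightarrow> real) \<Rightarrow> (real \<Rightarrow> real) \<Rightarrow> real" where
  "levy_dist l l' = Inf {\<epsilon>. \<epsilon> > 0 \<and>
      (\<forall>t\<ge>0. l (t + \<epsilon>) + \<epsilon> \<ge> l' t \<and> l' t \<ge> l (t - \<epsilon>) - \<epsilon>)}"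

definition stopped :: "real \<Rightarrow> (real \<Rightarrow> real) \<Rightarrow> (real \<Rightarrow> real)" where
  "stopped t l = (\<lambda>s. l (min t s))"

definition levy_dist_t :: "real \<Rightarrow> (real \<Rightarrow> real) \<Rightarrow> (real \<Rightarrow> real) \<Rightarrow> real" where
  "levy_dist_t t l l' = levy_dist (stopped t l) (stopped t l')"

definition hat_d :: "(real \<Rightarrow> real) \<Rightarrow> (real \<Rightarrow> real) \<Rightarrow> real" where
  "hat_d l l' = enn2real (\<integral>\<^sup>+ t. ennreal (indicator {0..} t * exp (- t) * min (levy_dist_t t l l') 1) \<partial>lborel)"

definition std_brownian_motion :: "'a measure \<Rightarrow> (real \<Rightarrow> 'a \<Rightarrow> real) \<Rightarrow> bool" where
  "std_brownian_motion P B \<longleftrightarrow>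
     prob_space P \<and>
     (\<forall>t\<ge>0. B t \<in> borel_measurable P) \<and>
     (\<forall>\<omega>\<in>space P. B 0 \<omega> = 0) \<and>
     (\<forall>\<omega>\<in>space P. continuous_on {0..} (\<lambda>t. B t \<omega>)) \<and>
     (\<forall>s t. 0 \<le> s \<and> s < t \<longrightarrow>
        distributed P lborel (\<lambda>\<omega>. B t \<omega> - B s \<omega>) (\<lambda>x. ennreal (normal_density 0 (sqrt (t - s)) x))) \<and>
     (\<forall>(n::nat) (ts::nat \<Rightarrow> real). 0 \<le> ts 0 \<and> (\<forall>i<n. ts i < ts (Suc i)) \<longrightarrow>
        prob_space.indep_vars P (\<lambda>_. borel) (\<lambda>i \<omega>. B (ts (Suc i)) \<omega> - B (ts i) \<omega>) {..<n})"

definition Xproc :: "('a \<Rightarrow> real) \<Rightarrow> real \<Rightarrow> (real \<Rightarrow> 'a \<Rightarrow> real) \<Rightarrow> (real \<Rightarrow> real)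
    \<Rightarrow> (real \<Rightarrow> real) \<Rightarrow> real \<Rightarrow> 'a \<Rightarrow> real" where
  "Xproc Z \<beta> B G l t \<omega> = Z \<omega> + \<beta> * t + B t \<omega> - G (l t)"

text \<open>tau^l = inf {t \<ge> 0. X^l_t \<le> 0} (extended real, inf of empty set = infinity)\<close>
definition tau :: "('a \<Rightarrow> real) \<Rightarrow> real \<Rightarrow> (real \<Rightarrow> 'a \<Rightarrow> real) \<Rightarrow> (real \<Rightarrow> real)
    \<Rightarrow> (real \<Rightarrow> real) \<Rightarrow> 'a \<Rightarrow> ereal" where
  "tau Z \<beta> B G l \<omega> = Inf {ereal t | t. t \<ge> 0 \<and> Xproc Z \<beta> B G l t \<omega> \<le> 0}"

definition Gamma :: "'a measure \<Rightarrow> ('a \<Rightarrow> real) \<Rightarrow> real \<Rightarrow> (real \<Rightarrow> 'a \<Rightarrow> real) \<Rightarrow> (real \<Rightarrow> real)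
    \<Rightarrow> (real \<Rightarrow> real) \<Rightarrow> real \<Rightarrow> real" where
  "Gamma P Z \<beta> B G l t = measure P {\<omega> \<in> space P. tau Z \<beta> B G l \<omega> \<le> ereal t}"

end

theory Submission
  imports Defs
begin

(* Since G o l is non-decreasing and right-continuous and t \<mapsto> Z + beta t + B_t is
   continuous, X^l is lower semicontinuous in time; hence {s >= 0. X^l_s <= 0} is closed and
   tau^l <= t holds exactly when X^l hits (-infinity, 0] during [0, t].
   Convergence in hat d yields shifts eps_n -> 0 with l^n_s <= l_(s + eps_n) + eps_n on [0, t].
   If omega lies in the hitting event A_n of l^n for infinitely many n, compactness of [0, t]
   gives hitting times s_k -> s, and the shift bound with right-continuity of l shows that
   X^l_s(omega) <= 0.  So limsup A_n is contained in the hitting event of l, and the reverse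
   Fatou inequality limsup P(A_n) <= P(limsup A_n) concludes. *)

lemma Mset_mono: "l \<in> Mset \<Longrightarrow> mono l"
  unfolding Mset_def by blast

lemma Mset_nonneg:
  assumes "l \<in> Mset" shows "0 \<le> l s"
proof -
  have "l (min s (-1)) = 0"
    using assms by (simp add: Mset_def)
  moreover have "l (min s (-1)) \<le> l s"
    using Mset_mono[OF assms] by (rule monoD) simp
  ultimately show ?thesis by simp
qed

lemma Mset_le_one: "l \<in> Mset \<Longrightarrow> l s \<le> 1"
  unfolding Mset_def by blast

lemma Mset_continuous_at_right: "l \<in> Mset \<Longrightarrow> continuous (at_right s) l"
  unfolding Mset_def by blast

lemma Mset_in_unit_interval: "l \<in> Mset \<Longrightarrow> l s \<in> {-1..1}"
  using Mset_nonneg[of l s] Mset_le_one[of l s] by simp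

lemma eventually_le_shift_limit:
  fixes l :: "real \<Rightarrow> real"
  assumes "mono l" and s: "s \<longlonglongrightarrow> s\<^sub>0" and \<epsilon>: "\<epsilon> \<longlonglongrightarrow> 0"
    and shift: "\<And>k. v k \<le> l (s k + \<epsilon> k) + \<epsilon> k" and "\<delta> > 0"
  shows "eventually (\<lambda>k. v k \<le> l (s\<^sub>0 + \<delta>) + \<delta>) sequentially"
proof -
  have "(\<lambda>k. s k + \<epsilon> k) \<longlonglongrightarrow> s\<^sub>0"
    using tendsto_add[OF s \<epsilon>] by simp
  then have "eventually (\<lambda>k. s k + \<epsilon> k < s\<^sub>0 + \<delta>) sequentially"
    using \<open>\<delta> > 0\<close> by (intro order_tendstoD(2)) auto
  moreover have "eventually (\<lambda>k. \<epsilon> k < \<delta>) sequentially"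
    using \<open>\<delta> > 0\<close> by (intro order_tendstoD(2)[OF \<epsilon>])
  ultimately show ?thesis
  proof eventually_elim
    case (elim k)
    then have "l (s k + \<epsilon> k) \<le> l (s\<^sub>0 + \<delta>)"
      using \<open>mono l\<close> by (simp add: monoD)
    then show ?case
      using shift[of k] elim by linarith
  qed
qed

lemma eventually_le_at_right_limit:
  fixes l v :: "_ \<Rightarrow> real"
  assumes "continuous (at_right x) l" and "\<And>\<delta>. \<delta> > 0 \<Longrightarrow> eventually (\<lambda>k. v k \<le> l (x + \<delta>) + \<delta>) F"
    and "\<eta> > 0"
  shows "eventually (\<lambda>k. v k \<le> l x + \<eta>) F"
proof -
  have "eventually (\<lambda>y. l y < l x + \<eta>/2) (at_right x)"
    using assms(1,3) unfolding continuous_within by (intro order_tendstoD(2)) auto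
  then obtain b where b: "b > x" "\<And>y. x < y \<Longrightarrow> y < b \<Longrightarrow> l y < l x + \<eta>/2"
    unfolding eventually_at_right_field by blast
  define \<delta> where "\<delta> = min (b - x) \<eta> / 2"
  have "\<delta> > 0" "x + \<delta> < b" "\<delta> \<le> \<eta>/2"
    using b(1) \<open>\<eta> > 0\<close> by (auto simp: \<delta>_def min_def field_simps)
  then have "l (x + \<delta>) + \<delta> < l x + \<eta>"
    using b(2)[of "x + \<delta>"] by simp
  then show ?thesis
    using assms(2)[OF \<open>\<delta> > 0\<close>] by (auto elim: eventually_mono)
qed

lemma eventually_mono_on_le:
  fixes G :: "real \<Rightarrow> real"
  assumes "continuous_on {a..b} G" and "mono_on {a..b} G" and "x \<in> {a..b}"
    and "\<And>k. v k \<in> {a..b}" and "\<And>\<delta>. \<delta> > 0 \<Longrightarrow> eventually (\<lambda>k. v k \<le> x + \<delta>) F"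
    and "\<eta> > 0"
  shows "eventually (\<lambda>k. G (v k) \<le> G x + \<eta>) F"
proof -
  obtain \<rho> where "\<rho> > 0" and \<rho>: "\<And>y. y \<in> {a..b} \<Longrightarrow> dist y x < \<rho> \<Longrightarrow> dist (G y) (G x) < \<eta>"
    using assms(1,3,6) unfolding continuous_on_iff by metis
  have "eventually (\<lambda>k. v k \<le> x + \<rho>/2) F"
    using assms(5) \<open>\<rho> > 0\<close> by simp
  then show ?thesis
  proof (rule eventually_mono)
    fix k assume "v k \<le> x + \<rho>/2"
    show "G (v k) \<le> G x + \<eta>"
    proof (cases "v k \<le> x")
      case True
      then show ?thesis
        using assms(2-4,6) mono_onD[of "{a..b}" G "v k" x] by force
    next
      case False
      then have "dist (v k) x < \<rho>"
        using \<open>v k \<le> x + \<rho>/2\<close> \<open>\<rho> > 0\<close> by (simp add: dist_real_def)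
      then have "dist (G (v k)) (G x) < \<eta>"
        using \<rho>[OF assms(4)] by blast
      then show ?thesis
        by (simp add: dist_real_def)
    qed
  qed
qed

lemma (in finite_measure) limsup_measure_le_measure_limsup:
  assumes "range A \<subseteq> sets M"
  shows "limsup (\<lambda>n. ereal (measure M (A n))) \<le> ereal (measure M (limsup A))"
proof -
  define C where "C m = (\<Union>n\<in>{m..}. A n)" for m
  have "limsup A = (\<Inter>m. C m)"
    by (simp add: limsup_INF_SUP C_def)
  have C: "range C \<subseteq> sets M" "decseq C"
    using assms by (auto simp: C_def decseq_def intro: order_trans)
  have "limsup (\<lambda>n. ereal (measure M (A n))) \<le> limsup (\<lambda>n. ereal (measure M (C n)))"
    using C(1) by (intro Limsup_mono always_eventually allI)
      (auto simp: C_def intro!: finite_measure_mono)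
  also have "\<dots> = ereal (measure M (\<Inter>m. C m))"
    using finite_Lim_measure_decseq[OF C] by (intro lim_imp_Limsup) (auto intro: tendsto_ereal)
  finally show ?thesis
    unfolding \<open>limsup A = (\<Inter>m. C m)\<close> .
qed

lemma std_brownian_motion_measurable:
  "std_brownian_motion P B \<Longrightarrow> t \<ge> 0 \<Longrightarrow> B t \<in> borel_measurable P"
  unfolding std_brownian_motion_def by blast

lemma std_brownian_motion_continuous:
  "std_brownian_motion P B \<Longrightarrow> \<omega> \<in> space P \<Longrightarrow> continuous_on {0..} (\<lambda>t. B t \<omega>)"
  unfolding std_brownian_motion_def by blast

(* Lower semicontinuity of X^l, which survives replacing l by functions f k lying below
   vanishing shifts of l. *)
lemma Xproc_nonpos_limit:
  fixes f :: "nat \<Rightarrow> real \<Rightarrow> real" and s \<epsilon> e :: "nat \<Rightarrow> real"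
  assumes l: "l \<in> Mset" and f: "\<And>k. f k \<in> Mset"
    and G: "continuous_on {-1..1} G" "mono_on {-1..1} G"
    and B: "continuous_on {0..} (\<lambda>t. B t \<omega>)"
    and s: "\<And>k. s k \<ge> 0" "s \<longlonglongrightarrow> s\<^sub>0" and \<epsilon>: "\<epsilon> \<longlonglongrightarrow> 0" and e: "e \<longlonglongrightarrow> 0"
    and X: "\<And>k. Xproc Z \<beta> B G (f k) (s k) \<omega> \<le> e k"
    and shift: "\<And>k. f k (s k) \<le> l (s k + \<epsilon> k) + \<epsilon> k"
  shows "Xproc Z \<beta> B G l s\<^sub>0 \<omega> \<le> 0"
proof -
  define Y where "Y t = Z \<omega> + \<beta> * t + B t \<omega>" for t
  have "s\<^sub>0 \<ge> 0"
    using s by (intro LIMSEQ_le_const) auto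
  have "continuous_on {0..} Y"
    unfolding Y_def using B by (intro continuous_intros)
  then have Y_lim: "(\<lambda>k. Y (s k)) \<longlonglongrightarrow> Y s\<^sub>0"
    using s \<open>s\<^sub>0 \<ge> 0\<close> by (auto intro: continuous_on_tendsto_compose)
  have l_ev: "eventually (\<lambda>k. f k (s k) \<le> l (s\<^sub>0 + \<delta>) + \<delta>) sequentially"
    if "\<delta> > 0" for \<delta>
    using Mset_mono[OF l] s(2) \<epsilon> shift that by (rule eventually_le_shift_limit)
  have "eventually (\<lambda>k. f k (s k) \<le> l s\<^sub>0 + \<delta>) sequentially" if "\<delta> > 0" for \<delta>
    by (rule eventually_le_at_right_limit[OF Mset_continuous_at_right[OF l] l_ev that])
  then have G_ev: "eventually (\<lambda>k. G (f k (s k)) \<le> G (l s\<^sub>0) + \<eta>) sequentially"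
    if "\<eta> > 0" for \<eta>
    by (rule eventually_mono_on_le[OF G Mset_in_unit_interval[OF l] Mset_in_unit_interval[OF f]
          _ that])
  have "Y s\<^sub>0 \<le> G (l s\<^sub>0) + \<eta>" if "\<eta> > 0" for \<eta>
  proof (rule tendsto_le[OF _ _ Y_lim])
    show "(\<lambda>k. G (l s\<^sub>0) + \<eta> + e k) \<longlonglongrightarrow> G (l s\<^sub>0) + \<eta>"
      using tendsto_add[OF tendsto_const e] by simp
    show "eventually (\<lambda>k. Y (s k) \<le> G (l s\<^sub>0) + \<eta> + e k) sequentially"
      using G_ev[OF that]
    proof (rule eventually_mono)
      fix k assume "G (f k (s k)) \<le> G (l s\<^sub>0) + \<eta>"
      then show "Y (s k) \<le> G (l s\<^sub>0) + \<eta> + e k"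
        using X[of k] unfolding Xproc_def Y_def by linarith
    qed
  qed simp
  then show ?thesis
    unfolding Xproc_def Y_def[symmetric] by (auto intro: field_le_epsilon)
qed

lemma closed_Xproc_nonpos:
  assumes l: "l \<in> Mset" and G: "continuous_on {-1..1} G" "mono_on {-1..1} G"
    and B: "continuous_on {0..} (\<lambda>t. B t \<omega>)"
  shows "closed {s. 0 \<le> s \<and> Xproc Z \<beta> B G l s \<omega> \<le> 0}"
  unfolding closed_sequential_limits
proof (intro allI impI, elim conjE)
  fix s :: "nat \<Rightarrow> real" and s\<^sub>0
  assume s: "\<forall>k. s k \<in> {s. 0 \<le> s \<and> Xproc Z \<beta> B G l s \<omega> \<le> 0}" and "s \<longlonglongrightarrow> s\<^sub>0"
  have "Xproc Z \<beta> B G l s\<^sub>0 \<omega> \<le> 0"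
    by (rule Xproc_nonpos_limit[where f="\<lambda>_. l" and \<epsilon>="\<lambda>_. 0" and e="\<lambda>_. 0"])
      (use l G B s \<open>s \<longlonglongrightarrow> s\<^sub>0\<close> in auto)
  moreover have "0 \<le> s\<^sub>0"
    using s \<open>s \<longlonglongrightarrow> s\<^sub>0\<close> by (intro LIMSEQ_le_const) auto
  ultimately show "s\<^sub>0 \<in> {s. 0 \<le> s \<and> Xproc Z \<beta> B G l s \<omega> \<le> 0}"
    by simp
qed

lemma tau_le_iff:
  assumes l: "l \<in> Mset" and G: "continuous_on {-1..1} G" "mono_on {-1..1} G"
    and B: "continuous_on {0..} (\<lambda>t. B t \<omega>)"
  shows "tau Z \<beta> B G l \<omega> \<le> ereal t \<longleftrightarrow> (\<exists>s\<in>{0..t}. Xproc Z \<beta> B G l s \<omega> \<le> 0)"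
proof -
  define H where "H = {s. 0 \<le> s \<and> Xproc Z \<beta> B G l s \<omega> \<le> 0}"
  have tau_eq: "tau Z \<beta> B G l \<omega> = (INF s\<in>H. ereal s)"
    unfolding tau_def H_def by (rule arg_cong[where f=Inf]) auto
  show ?thesis
  proof (cases "H = {}")
    case True
    have "tau Z \<beta> B G l \<omega> = \<infinity>"
      unfolding tau_eq True by (simp add: top_ereal_def)
    then show ?thesis
      using True by (auto simp: H_def)
  next
    case False
    have "bdd_below H"
      unfolding H_def by (rule bdd_belowI[of _ 0]) simp
    have "Inf H \<in> H"
      unfolding H_def
      using closed_contains_Inf[OF False[unfolded H_def] \<open>bdd_below H\<close>[unfolded H_def]
          closed_Xproc_nonpos[where B=B and \<omega>=\<omega>, OF l G B]] .
    have "tau Z \<beta> B G l \<omega> = ereal (Inf H)"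
      unfolding tau_eq by (rule ereal_Inf'[OF \<open>bdd_below H\<close> False, symmetric])
    then have "tau Z \<beta> B G l \<omega> \<le> ereal t \<longleftrightarrow> (\<exists>s\<in>H. s \<le> t)"
      using \<open>Inf H \<in> H\<close> \<open>bdd_below H\<close> by (auto intro: cInf_lower order_trans)
    then show ?thesis
      by (auto simp: H_def)
  qed
qed

lemma Gamma_eq_measure:
  assumes l: "l \<in> Mset" and G: "continuous_on {-1..1} G" "mono_on {-1..1} G"
    and B: "std_brownian_motion P B"
  shows "Gamma P Z \<beta> B G l t = measure P {\<omega>\<in>space P. \<exists>s\<in>{0..t}. Xproc Z \<beta> B G l s \<omega> \<le> 0}"
  unfolding Gamma_def
  by (intro arg_cong[where f="measure P"] Collect_cong conj_cong refl
      tau_le_iff[OF l G std_brownian_motion_continuous[OF B]])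

lemma Xproc_tendsto_at_right:
  assumes l: "l \<in> Mset" and G: "continuous_on {-1..1} G"
    and B: "continuous_on {0..} (\<lambda>t. B t \<omega>)" and "s \<ge> 0"
  shows "((\<lambda>q. Xproc Z \<beta> B G l q \<omega>) \<longlongrightarrow> Xproc Z \<beta> B G l s \<omega>) (at_right s)"
proof -
  have "((\<lambda>q. B q \<omega>) \<longlongrightarrow> B s \<omega>) (at s within {0..})"
    using B \<open>s \<ge> 0\<close> unfolding continuous_on_def by auto
  then have B_lim: "((\<lambda>q. B q \<omega>) \<longlongrightarrow> B s \<omega>) (at_right s)"
    by (rule tendsto_within_subset) (use \<open>s \<ge> 0\<close> in auto)
  have "(l \<longlongrightarrow> l s) (at_right s)"
    using Mset_continuous_at_right[OF l] by (simp add: continuous_within)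
  then have "((\<lambda>q. G (l q)) \<longlongrightarrow> G (l s)) (at_right s)"
    using Mset_in_unit_interval[OF l] by (auto intro: continuous_on_tendsto_compose[OF G])
  with B_lim show ?thesis
    unfolding Xproc_def by (intro tendsto_intros)
qed

(* t is included because X^l is only right-continuous: a hit at time t cannot be
   approximated from inside [0, t]. *)
lemma exists_rational_Xproc_less:
  assumes l: "l \<in> Mset" and G: "continuous_on {-1..1} G"
    and B: "continuous_on {0..} (\<lambda>t. B t \<omega>)"
    and s: "0 \<le> s" "s \<le> t" "Xproc Z \<beta> B G l s \<omega> \<le> 0" and "c > 0"
  shows "\<exists>q\<in>insert t ({0..t} \<inter> \<rat>). Xproc Z \<beta> B G l q \<omega> < c"
proof (cases "s = t")
  case True
  then show ?thesis
    using s(3) \<open>c > 0\<close> by auto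
next
  case False
  have "eventually (\<lambda>q. Xproc Z \<beta> B G l q \<omega> < c) (at_right s)"
    using s(3) \<open>c > 0\<close>
    by (intro order_tendstoD(2)[OF Xproc_tendsto_at_right[where B=B and \<omega>=\<omega>, OF l G B s(1)]])
      auto
  then obtain b where "b > s" and b: "\<And>q. s < q \<Longrightarrow> q < b \<Longrightarrow> Xproc Z \<beta> B G l q \<omega> < c"
    unfolding eventually_at_right_field by blast
  obtain q where "q \<in> \<rat>" "s < q" "q < min b t"
    using Rats_dense_in_real[of s "min b t"] \<open>b > s\<close> s(2) False by auto
  then show ?thesis
    using b s(1) by (intro bexI[of _ q]) auto
qed

lemma Xproc_nonpos_iff_dense:
  fixes t :: real
  assumes l: "l \<in> Mset" and G: "continuous_on {-1..1} G" "mono_on {-1..1} G"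
    and B: "continuous_on {0..} (\<lambda>t. B t \<omega>)" and "t \<ge> 0"
  defines "D \<equiv> insert t ({0..t} \<inter> \<rat>)"
  shows "(\<exists>s\<in>{0..t}. Xproc Z \<beta> B G l s \<omega> \<le> 0) \<longleftrightarrow>
    (\<forall>k::nat. \<exists>q\<in>D. Xproc Z \<beta> B G l q \<omega> < inverse (Suc k))"
proof (intro iffI allI)
  fix k :: nat
  assume "\<exists>s\<in>{0..t}. Xproc Z \<beta> B G l s \<omega> \<le> 0"
  then obtain s where "0 \<le> s" "s \<le> t" "Xproc Z \<beta> B G l s \<omega> \<le> 0"
    by auto
  then show "\<exists>q\<in>D. Xproc Z \<beta> B G l q \<omega> < inverse (Suc k)"
    unfolding D_def by (rule exists_rational_Xproc_less[where B=B and \<omega>=\<omega>, OF l G(1) B]) simp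
next
  assume "\<forall>k::nat. \<exists>q\<in>D. Xproc Z \<beta> B G l q \<omega> < inverse (Suc k)"
  then obtain q where q: "\<And>k. q k \<in> D" "\<And>k. Xproc Z \<beta> B G l (q k) \<omega> < inverse (Suc k)"
    by metis
  have "\<forall>k. q k \<in> {0..t}"
    using q(1) \<open>t \<ge> 0\<close> unfolding D_def by fastforce
  then obtain s r where "s \<in> {0..t}" "strict_mono r" "(q \<circ> r) \<longlonglongrightarrow> s"
    using seq_compactE[OF compact_imp_seq_compact[OF compact_Icc]] by metis
  have "(\<lambda>k. inverse (real (Suc (r k)))) \<longlonglongrightarrow> 0"
    using LIMSEQ_subseq_LIMSEQ[OF LIMSEQ_inverse_real_of_nat \<open>strict_mono r\<close>] by (simp add: o_def)
  then have "Xproc Z \<beta> B G l s \<omega> \<le> 0"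
    using \<open>(q \<circ> r) \<longlonglongrightarrow> s\<close> \<open>\<forall>k. q k \<in> {0..t}\<close> q(2)
    by (intro Xproc_nonpos_limit[where f="\<lambda>_. l" and \<epsilon>="\<lambda>_. 0"])
      (use l G B in \<open>auto intro: less_imp_le\<close>)
  with \<open>s \<in> {0..t}\<close> show "\<exists>s\<in>{0..t}. Xproc Z \<beta> B G l s \<omega> \<le> 0"
    by blast
qed

lemma hitting_event_measurable:
  assumes l: "l \<in> Mset" and G: "continuous_on {-1..1} G" "mono_on {-1..1} G"
    and Z: "Z \<in> borel_measurable P" and B: "std_brownian_motion P B" and "t \<ge> 0"
  shows "{\<omega>\<in>space P. \<exists>s\<in>{0..t}. Xproc Z \<beta> B G l s \<omega> \<le> 0} \<in> sets P"
proof -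
  define D where "D = insert t ({0..t} \<inter> \<rat>)"
  have "countable D"
    unfolding D_def using countable_rat by auto
  have X_meas: "Xproc Z \<beta> B G l q \<in> borel_measurable P" if "q \<in> D" for q
    unfolding Xproc_def using Z std_brownian_motion_measurable[OF B] that \<open>t \<ge> 0\<close>
    by (auto simp: D_def)
  have "(\<exists>s\<in>{0..t}. Xproc Z \<beta> B G l s \<omega> \<le> 0) \<longleftrightarrow>
      (\<forall>k::nat. \<exists>q\<in>D. Xproc Z \<beta> B G l q \<omega> < inverse (Suc k))" if "\<omega> \<in> space P" for \<omega>
    unfolding D_def
    by (rule Xproc_nonpos_iff_dense[where B=B and \<omega>=\<omega>,
          OF l G std_brownian_motion_continuous[OF B that] \<open>t \<ge> 0\<close>])
  then have "{\<omega>\<in>space P. \<exists>s\<in>{0..t}. Xproc Z \<beta> B G l s \<omega> \<le> 0}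
      = {\<omega>\<in>space P. \<forall>k::nat. \<exists>q\<in>D. Xproc Z \<beta> B G l q \<omega> < inverse (Suc k)}"
    by auto
  also have "\<dots> \<in> sets P"
    using X_meas \<open>countable D\<close> by measurable
  finally show ?thesis .
qed

definition levy_set :: "(real \<Rightarrow> real) \<Rightarrow> (real \<Rightarrow> real) \<Rightarrow> real set" where
  "levy_set l l' = {\<epsilon>. \<epsilon> > 0 \<and>
      (\<forall>t\<ge>0. l (t + \<epsilon>) + \<epsilon> \<ge> l' t \<and> l' t \<ge> l (t - \<epsilon>) - \<epsilon>)}"

lemma levy_dist_eq_Inf_levy_set: "levy_dist l l' = Inf (levy_set l l')"
  unfolding levy_dist_def levy_set_def ..

lemma one_in_levy_set:
  assumes "\<And>x. l x \<in> {0..1}" and "\<And>x. l' x \<in> {0..1}"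
  shows "1 \<in> levy_set l l'"
proof -
  have "l' y \<le> l x + 1 \<and> l x - 1 \<le> l' y" for x y
    using assms(1)[of x] assms(2)[of y] by auto
  then show ?thesis
    unfolding levy_set_def by auto
qed

lemma levy_dist_lessD:
  assumes "levy_dist l l' < e" and "levy_set l l' \<noteq> {}"
  shows "\<exists>\<epsilon>\<in>levy_set l l'. \<epsilon> < e"
proof -
  have "bdd_below (levy_set l l')"
    by (rule bdd_belowI[of _ 0]) (simp add: levy_set_def)
  then show ?thesis
    using cInf_less_iff[OF assms(2)] assms(1) by (simp add: levy_dist_eq_Inf_levy_set)
qed

lemma stopped_Mset_in_unit_interval: "l \<in> Mset \<Longrightarrow> stopped T l x \<in> {0..1}"
  unfolding stopped_def using Mset_nonneg Mset_le_one by auto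

lemma levy_set_stopped_shift:
  assumes "mono g" and "\<epsilon> \<in> levy_set (stopped T f) (stopped T g)" and "0 \<le> s" "s \<le> T"
  shows "f s \<le> g (s + \<epsilon>) + \<epsilon>"
proof -
  have "stopped T g (s + \<epsilon>) \<ge> stopped T f s - \<epsilon>"
    using assms(2-3) unfolding levy_set_def by (auto dest!: spec[of _ "s + \<epsilon>"])
  moreover have "g (min T (s + \<epsilon>)) \<le> g (s + \<epsilon>)"
    using assms(1) by (simp add: monoD)
  ultimately show ?thesis
    using assms(4) by (simp add: stopped_def min_absorb2)
qed

lemma nn_integral_hat_d_finite:
  "(\<integral>\<^sup>+ t. ennreal (indicator {0..} t * exp (- t) * min (levy_dist_t t f g) 1) \<partial>lborel) < \<infinity>"
proof -
  have "(\<integral>\<^sup>+ t. ennreal (indicator {0..} t * exp (- t) * min (levy_dist_t t f g) 1) \<partial>lborel)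
      \<le> (\<integral>\<^sup>+ t. ennreal (exponential_density 1 t) \<partial>lborel)"
    by (intro nn_integral_mono ennreal_leI)
      (auto simp: exponential_density_def indicator_def intro: mult_left_le)
  also have "\<dots> = 1"
    using prob_space.emeasure_space_1[OF prob_space_exponential_density[of 1]]
    by (simp add: emeasure_density)
  finally show ?thesis
    by (simp add: le_less_trans)
qed

lemma ennreal_hat_d:
  "ennreal (hat_d f g)
    = (\<integral>\<^sup>+ t. ennreal (indicator {0..} t * exp (- t) * min (levy_dist_t t f g) 1) \<partial>lborel)"
  unfolding hat_d_def using nn_integral_hat_d_finite by (simp add: less_top)

lemma hat_d_nonneg: "0 \<le> hat_d f g"
  unfolding hat_d_def by simp

lemma hat_d_ge_of_levy_dist_t_ge:
  assumes "t \<ge> 0" and "e \<ge> 0" and e: "\<And>T. T \<in> {t..t+1} \<Longrightarrow> e \<le> min (levy_dist_t T f g) 1"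
  shows "exp (-(t+1)) * e \<le> hat_d f g"
proof -
  have "ennreal (exp (-(t+1)) * e)
      = (\<integral>\<^sup>+ x. ennreal (exp (-(t+1)) * e) * indicator {t..t+1} x \<partial>lborel)"
    by (simp add: nn_integral_cmult_indicator)
  also have "\<dots> \<le> ennreal (hat_d f g)"
    unfolding ennreal_hat_d
  proof (intro nn_integral_mono)
    fix x :: real
    show "ennreal (exp (-(t+1)) * e) * indicator {t..t+1} x
        \<le> ennreal (indicator {0..} x * exp (- x) * min (levy_dist_t x f g) 1)"
    proof (cases "x \<in> {t..t+1}")
      case True
      then have "exp (-(t+1)) * e \<le> exp (- x) * min (levy_dist_t x f g) 1"
        using e[OF True] \<open>e \<ge> 0\<close> by (intro mult_mono) auto
      then show ?thesis
        using True \<open>t \<ge> 0\<close> by (simp add: ennreal_leI)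
    qed simp
  qed
  finally show ?thesis
    using hat_d_nonneg by (simp add: ennreal_le_iff)
qed

lemma exists_levy_dist_t_less:
  assumes "t \<ge> 0" and "c > 0"
  shows "\<exists>T\<in>{t..t+1}. min (levy_dist_t T f g) 1 < exp (t+1) * hat_d f g + c"
proof (rule ccontr)
  define e where "e = exp (t+1) * hat_d f g + c"
  assume "\<not> ?thesis"
  then have "e \<le> min (levy_dist_t T f g) 1" if "T \<in> {t..t+1}" for T
    using that by (auto simp: e_def not_less)
  moreover have "e \<ge> 0"
    using hat_d_nonneg[of f g] \<open>c > 0\<close> by (simp add: e_def)
  ultimately have "exp (-(t+1)) * e \<le> hat_d f g"
    using hat_d_ge_of_levy_dist_t_ge[OF \<open>t \<ge> 0\<close>] by blast
  moreover have "exp (-(t+1)) * exp (t+1) = 1"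
    by (simp flip: exp_add)
  then have "exp (-(t+1)) * e = hat_d f g + exp (-(t+1)) * c"
    unfolding e_def distrib_left mult.assoc[symmetric] by simp
  moreover have "exp (-(t+1)) * c > 0"
    using \<open>c > 0\<close> by simp
  ultimately show False
    by linarith
qed

lemma exists_shift_of_hat_d:
  assumes f: "f \<in> Mset" and g: "g \<in> Mset" and "t \<ge> 0" and "c > 0"
  shows "\<exists>\<epsilon>>0. \<epsilon> < exp (t+1) * hat_d f g + c \<and> (\<forall>s\<in>{0..t}. f s \<le> g (s + \<epsilon>) + \<epsilon>)"
proof -
  obtain T where T: "T \<in> {t..t+1}" "min (levy_dist_t T f g) 1 < exp (t+1) * hat_d f g + c"
    using exists_levy_dist_t_less[OF assms(3,4)] by blast
  have one: "1 \<in> levy_set (stopped T f) (stopped T g)"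
    using stopped_Mset_in_unit_interval f g by (intro one_in_levy_set)
  obtain \<epsilon> where \<epsilon>: "\<epsilon> \<in> levy_set (stopped T f) (stopped T g)" "\<epsilon> < exp (t+1) * hat_d f g + c"
  proof (cases "levy_dist_t T f g < 1")
    case True
    then have "levy_dist (stopped T f) (stopped T g) < exp (t+1) * hat_d f g + c"
      using T(2) by (simp add: levy_dist_t_def)
    then show ?thesis
      using levy_dist_lessD one that by blast
  next
    case False
    then show ?thesis
      using T(2) by (intro that[OF one]) simp
  qed
  have "f s \<le> g (s + \<epsilon>) + \<epsilon>" if "s \<in> {0..t}" for s
    by (rule levy_set_stopped_shift[OF Mset_mono[OF g] \<epsilon>(1)]) (use that T(1) in auto)
  moreover have "\<epsilon> > 0"
    using \<epsilon>(1) by (simp add: levy_set_def)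
  ultimately show ?thesis
    using \<epsilon>(2) by blast
qed

lemma hat_d_tendsto_zero_imp_shift:
  assumes ls: "\<And>n. ls n \<in> Mset" and l: "l \<in> Mset"
    and lim: "(\<lambda>n. hat_d (ls n) l) \<longlonglongrightarrow> 0" and "t \<ge> 0"
  obtains \<epsilon> where "\<epsilon> \<longlonglongrightarrow> 0" and "\<And>n s. s \<in> {0..t} \<Longrightarrow> ls n s \<le> l (s + \<epsilon> n) + \<epsilon> n"
proof -
  \<comment> \<open>the slack is needed because the Levy distance is an infimum that need not be attained\<close>
  define e where "e n = exp (t+1) * hat_d (ls n) l + inverse (Suc n)" for n
  have "\<forall>n. \<exists>\<epsilon>>0. \<epsilon> < e n \<and> (\<forall>s\<in>{0..t}. ls n s \<le> l (s + \<epsilon>) + \<epsilon>)"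
    unfolding e_def using exists_shift_of_hat_d[OF ls l \<open>t \<ge> 0\<close>] by simp
  then obtain \<epsilon> where \<epsilon>: "\<And>n. 0 < \<epsilon> n" "\<And>n. \<epsilon> n < e n"
    and shift: "\<And>n s. s \<in> {0..t} \<Longrightarrow> ls n s \<le> l (s + \<epsilon> n) + \<epsilon> n"
    by metis
  have "e \<longlonglongrightarrow> exp (t+1) * 0 + 0"
    unfolding e_def
    by (rule tendsto_add[OF tendsto_mult[OF tendsto_const lim] LIMSEQ_inverse_real_of_nat])
  then have "e \<longlonglongrightarrow> 0"
    by simp
  have "\<epsilon> \<longlonglongrightarrow> 0"
  proof (rule tendsto_sandwich[OF _ _ tendsto_const \<open>e \<longlonglongrightarrow> 0\<close>])
    show "eventually (\<lambda>n. 0 \<le> \<epsilon> n) sequentially" "eventually (\<lambda>n. \<epsilon> n \<le> e n) sequentially"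
      using \<epsilon> by (simp_all add: less_imp_le)
  qed
  then show ?thesis
    using shift by (rule that)
qed

lemma Xproc_nonpos_of_frequently:
  fixes ls :: "nat \<Rightarrow> real \<Rightarrow> real"
  assumes ls: "\<And>n. ls n \<in> Mset" and l: "l \<in> Mset"
    and G: "continuous_on {-1..1} G" "mono_on {-1..1} G"
    and B: "continuous_on {0..} (\<lambda>t. B t \<omega>)"
    and \<epsilon>: "\<epsilon> \<longlonglongrightarrow> 0" and shift: "\<And>n s. s \<in> {0..t} \<Longrightarrow> ls n s \<le> l (s + \<epsilon> n) + \<epsilon> n"
    and hits: "\<exists>\<^sub>F n in sequentially. \<exists>s\<in>{0..t}. Xproc Z \<beta> B G (ls n) s \<omega> \<le> 0"
  shows "\<exists>s\<in>{0..t}. Xproc Z \<beta> B G l s \<omega> \<le> 0"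
proof -
  obtain r :: "nat \<Rightarrow> nat" where "strict_mono r"
    and "\<And>k. \<exists>s\<in>{0..t}. Xproc Z \<beta> B G (ls (r k)) s \<omega> \<le> 0"
    using not_eventually_sequentiallyD[OF hits[unfolded frequently_def]] by auto
  then obtain u :: "nat \<Rightarrow> real"
    where u: "\<And>k. u k \<in> {0..t}" "\<And>k. Xproc Z \<beta> B G (ls (r k)) (u k) \<omega> \<le> 0"
    by metis
  then obtain s and r' :: "nat \<Rightarrow> nat" where "s \<in> {0..t}" "strict_mono r'" "(u \<circ> r') \<longlonglongrightarrow> s"
    using seq_compactE[OF compact_imp_seq_compact[OF compact_Icc]] by blast
  have "(\<epsilon> \<circ> (r \<circ> r')) \<longlonglongrightarrow> 0"
    using LIMSEQ_subseq_LIMSEQ[OF \<epsilon> strict_mono_o[OF \<open>strict_mono r\<close> \<open>strict_mono r'\<close>]] .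
  have "Xproc Z \<beta> B G l s \<omega> \<le> 0"
  proof (rule Xproc_nonpos_limit[where f="\<lambda>k. ls (r (r' k))" and e="\<lambda>_. 0", OF l ls G])
    show "continuous_on {0..} (\<lambda>t. B t \<omega>)" by (fact B)
    show "(u \<circ> r') \<longlonglongrightarrow> s" "(\<epsilon> \<circ> (r \<circ> r')) \<longlonglongrightarrow> 0" "(\<lambda>_. 0) \<longlonglongrightarrow> (0::real)"
      by fact+ simp
    fix k
    show "0 \<le> (u \<circ> r') k" "Xproc Z \<beta> B G (ls (r (r' k))) ((u \<circ> r') k) \<omega> \<le> 0"
      using u[of "r' k"] by auto
    show "ls (r (r' k)) ((u \<circ> r') k) \<le> l ((u \<circ> r') k + (\<epsilon> \<circ> (r \<circ> r')) k) + (\<epsilon> \<circ> (r \<circ> r')) k"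
      using shift u(1) by simp
  qed
  with \<open>s \<in> {0..t}\<close> show ?thesis
    by blast
qed

lemma limsup_hitting_events_subset:
  fixes ls :: "nat \<Rightarrow> real \<Rightarrow> real"
  assumes ls: "\<And>n. ls n \<in> Mset" and l: "l \<in> Mset"
    and G: "continuous_on {-1..1} G" "mono_on {-1..1} G" and B: "std_brownian_motion P B"
    and \<epsilon>: "\<epsilon> \<longlonglongrightarrow> 0" and shift: "\<And>n s. s \<in> {0..t} \<Longrightarrow> ls n s \<le> l (s + \<epsilon> n) + \<epsilon> n"
  shows "limsup (\<lambda>n. {\<omega>\<in>space P. \<exists>s\<in>{0..t}. Xproc Z \<beta> B G (ls n) s \<omega> \<le> 0})
    \<subseteq> {\<omega>\<in>space P. \<exists>s\<in>{0..t}. Xproc Z \<beta> B G l s \<omega> \<le> 0}"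
proof
  fix \<omega>
  assume "\<omega> \<in> limsup (\<lambda>n. {\<omega>\<in>space P. \<exists>s\<in>{0..t}. Xproc Z \<beta> B G (ls n) s \<omega> \<le> 0})"
  then have freq: "\<exists>\<^sub>F n in sequentially. \<omega> \<in> space P \<and> (\<exists>s\<in>{0..t}. Xproc Z \<beta> B G (ls n) s \<omega> \<le> 0)"
    by (simp add: mem_limsup_iff)
  then have "\<omega> \<in> space P"
    using frequently_ex by blast
  have "\<exists>\<^sub>F n in sequentially. \<exists>s\<in>{0..t}. Xproc Z \<beta> B G (ls n) s \<omega> \<le> 0"
    using freq by (rule frequently_elim1) simp
  then show "\<omega> \<in> {\<omega>\<in>space P. \<exists>s\<in>{0..t}. Xproc Z \<beta> B G l s \<omega> \<le> 0}"
    using Xproc_nonpos_of_frequently[where B=B and \<omega>=\<omega>, OF ls l G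
        std_brownian_motion_continuous[OF B \<open>\<omega> \<in> space P\<close>] \<epsilon> shift] \<open>\<omega> \<in> space P\<close>
    by simp
qed

theorem lemma3p1:
  fixes P :: "'a measure" and Z :: "'a \<Rightarrow> real" and B :: "real \<Rightarrow> 'a \<Rightarrow> real"
    and G :: "real \<Rightarrow> real" and \<beta> :: real
    and ls :: "nat \<Rightarrow> real \<Rightarrow> real" and l :: "real \<Rightarrow> real"
  assumes "prob_space P"
    and "continuous_on {-1..1} G" and "mono_on {-1..1} G" and "G 0 = 0"
    and "Z \<in> borel_measurable P"
    and "std_brownian_motion P B"
    and "prob_space.indep_set P (sets (vimage_algebra (space P) Z borel))
           (sets (vimage_algebra (space P) (\<lambda>\<omega>. restrict (\<lambda>t. B t \<omega>) {0..})
                    (Pi\<^sub>M {0..} (\<lambda>_. borel))))"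
    and "\<forall>n. ls n \<in> Mset" and "l \<in> Mset"
    and "(\<lambda>n. hat_d (ls n) l) \<longlonglongrightarrow> 0"
  shows "\<forall>t\<ge>0. limsup (\<lambda>n. ereal (Gamma P Z \<beta> B G (ls n) t)) \<le> ereal (Gamma P Z \<beta> B G l t)"
proof (intro allI impI)
  fix t :: real
  assume "t \<ge> 0"
  interpret prob_space P by fact
  note G = assms(2,3) and Z = assms(5) and B = assms(6)
    and ls = assms(8)[rule_format] and l = assms(9)
  define A where "A n = {\<omega>\<in>space P. \<exists>s\<in>{0..t}. Xproc Z \<beta> B G (ls n) s \<omega> \<le> 0}" for n
  define A\<^sub>l where "A\<^sub>l = {\<omega>\<in>space P. \<exists>s\<in>{0..t}. Xproc Z \<beta> B G l s \<omega> \<le> 0}"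
  obtain \<epsilon> where "\<epsilon> \<longlonglongrightarrow> 0" and shift: "\<And>n s. s \<in> {0..t} \<Longrightarrow> ls n s \<le> l (s + \<epsilon> n) + \<epsilon> n"
    using hat_d_tendsto_zero_imp_shift[OF ls l assms(10) \<open>t \<ge> 0\<close>] by blast
  have "limsup A \<subseteq> A\<^sub>l"
    unfolding A_def A\<^sub>l_def by (rule limsup_hitting_events_subset[OF ls l G B \<open>\<epsilon> \<longlonglongrightarrow> 0\<close> shift])
  have "limsup (\<lambda>n. ereal (Gamma P Z \<beta> B G (ls n) t)) = limsup (\<lambda>n. ereal (measure P (A n)))"
    unfolding A_def Gamma_eq_measure[OF ls G B] ..
  also have "\<dots> \<le> ereal (measure P (limsup A))"
    unfolding A_def using hitting_event_measurable[OF ls G Z B \<open>t \<ge> 0\<close>]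
    by (intro limsup_measure_le_measure_limsup) auto
  also have "\<dots> \<le> ereal (measure P A\<^sub>l)"
    using \<open>limsup A \<subseteq> A\<^sub>l\<close> hitting_event_measurable[OF l G Z B \<open>t \<ge> 0\<close>]
    by (simp add: A\<^sub>l_def finite_measure_mono)
  also have "\<dots> = ereal (Gamma P Z \<beta> B G l t)"
    unfolding A\<^sub>l_def Gamma_eq_measure[OF l G B] ..
  finally show "limsup (\<lambda>n. ereal (Gamma P Z \<beta> B G (ls n) t)) \<le> ereal (Gamma P Z \<beta> B G l t)" .
qed

end
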